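(* Let $\{a,b\}$ be a $2$-element generating set of a finite abelian group $G$. For every integer $k$ with $0\le k<|G|$, there is a spanning quasi-path $P$ in $\mathrm{Cay}(G;a,b)$ such that $\delta_b(P)=k$.
   Context: The Cayley digraph $\mathrm{Cay}(G;a,b)$ has vertex set $G$ and an arc from $v$ to $v+s$ for all $v\in G$, $s\in\{a,b\}$; such an arc is an $s$-edge, and $\delta_b(P)$ denotes the number of $b$-edges in a subdigraph $P$. A spanning quasi-path in a digraph is a spanning subdigraph such that exactly one connected component is a directed path and all other components are directed cycles. *)

theory Defs
  imports Main
begin

inductive_set gen2 :: "'a::ab_group_add \<Rightarrow> 'a \<Rightarrow> 'a set" for a b where
  zero: "0 \<in> gen2 a b"
| gen_a: "a \<in> gen2 a b"
| gen_b: "b \<in> gen2 a b"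
| add: "x \<in> gen2 a b \<Longrightarrow> y \<in> gen2 a b \<Longrightarrow> x + y \<in> gen2 a b"
| neg: "x \<in> gen2 a b \<Longrightarrow> - x \<in> gen2 a b"

definition generates2 :: "'a::ab_group_add \<Rightarrow> 'a \<Rightarrow> bool" where
  "generates2 a b \<longleftrightarrow> gen2 a b = UNIV"

definition cay_arcs :: "'a::ab_group_add \<Rightarrow> 'a \<Rightarrow> ('a \<times> 'a) set" where
  "cay_arcs a b = {(v, v + s) | v s. s \<in> {a, b}}"

definition components :: "'v set \<Rightarrow> ('v \<times> 'v) set \<Rightarrow> 'v set set" where
  "components V E = V // ((E \<union> E\<inverse>)\<^sup>* \<inter> (V \<times> V))"

definition arcs_in :: "'v set \<Rightarrow> ('v \<times> 'v) set \<Rightarrow> ('v \<times> 'v) set" where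
  "arcs_in C E = {e \<in> E. fst e \<in> C \<and> snd e \<in> C}"

definition is_dipath :: "'v set \<Rightarrow> ('v \<times> 'v) set \<Rightarrow> bool" where
  "is_dipath C F \<longleftrightarrow> (\<exists>xs. xs \<noteq> [] \<and> distinct xs \<and> set xs = C \<and> F = set (zip xs (tl xs)))"

definition is_dicycle :: "'v set \<Rightarrow> ('v \<times> 'v) set \<Rightarrow> bool" where
  "is_dicycle C F \<longleftrightarrow> (\<exists>xs. xs \<noteq> [] \<and> distinct xs \<and> set xs = C \<and> F = set (zip xs (tl xs @ [hd xs])))"

definition spanning_quasi_path :: "'v set \<Rightarrow> ('v \<times> 'v) set \<Rightarrow> ('v \<times> 'v) set \<Rightarrow> bool" where
  "spanning_quasi_path V A E \<longleftrightarrow>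
     E \<subseteq> A \<and>
     (\<forall>C \<in> components V E. is_dipath C (arcs_in C E) \<or> is_dicycle C (arcs_in C E)) \<and>
     card {C \<in> components V E. is_dipath C (arcs_in C E)} = 1"

definition delta_b :: "'a::ab_group_add \<Rightarrow> ('a \<times> 'a) set \<Rightarrow> nat" where
  "delta_b b E = card {e \<in> E. snd e = fst e + b}"

end

theory Submission
  imports Defs "HOL-Combinatorics.Cycles" "HOL-Combinatorics.Orbits"
begin

(* Let C be a set of vertices with 0 \<in> C such that c + (a - b) \<in> C for every nonzero c \<in> C.
   The map sending v to v + a for v \<in> C and to v + b otherwise is then injective away from 0,
   so its arcs out of the nonzero vertices form a spanning quasi-path: adding one arc out of 0
   turns the map into a permutation, whose cycles are the components, and deleting that arc
   again opens the cycle through 0 into a path.  The b-edges are the arcs out of the vertices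
   outside C, and sets C of every size 1, ..., |G| exist: enlarge C one vertex at a time, and
   when no single vertex can be added, trade the nonzero multiples of a - b for a whole coset
   of them. *)

lemma last_notin_set_zip_tl: "distinct xs \<Longrightarrow> (last xs, y) \<notin> set (zip xs (tl xs))"
  by (induction xs rule: induct_list012) auto

lemma zip_Cons_snoc: "zip (x # xs) (xs @ [y]) = zip (x # xs) xs @ [(last (x # xs), y)]"
  by (induction xs arbitrary: x) auto

lemma set_zip_tl_eq_rotate1_Diff:
  assumes "distinct xs" and "xs \<noteq> []"
  shows "set (zip xs (tl xs)) = set (zip xs (rotate1 xs)) - {(last xs, hd xs)}"
  using last_notin_set_zip_tl[OF assms(1)] \<open>xs \<noteq> []\<close>
  by (cases xs) (auto simp: zip_Cons_snoc simp del: last.simps)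

lemma set_zip_rotate1_eq_graph:
  assumes "map f xs = rotate1 xs"
  shows "set (zip xs (rotate1 xs)) = {(u, f u) | u. u \<in> set xs}"
proof -
  have "zip xs (map f xs) = map (\<lambda>u. (u, f u)) xs"
    by (induction xs) auto
  then show ?thesis
    unfolding assms[symmetric] by auto
qed

lemma dipath_has_sink:
  assumes "is_dipath C F"
  obtains v where "v \<in> C" and "\<And>w. (v, w) \<notin> F"
proof -
  from assms obtain xs where "xs \<noteq> []" "distinct xs" "set xs = C" "F = set (zip xs (tl xs))"
    unfolding is_dipath_def by blast
  then show thesis
    using that[of "last xs"] last_notin_set_zip_tl[of xs] by auto
qed

abbreviation component :: "('v \<times> 'v) set \<Rightarrow> 'v \<Rightarrow> 'v set" where
  "component E v \<equiv> (E \<union> E\<inverse>)\<^sup>* `` {v}"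

lemma components_UNIV: "components UNIV E = range (component E)"
  unfolding components_def quotient_def by auto

lemma component_subset_if_closed:
  assumes "v \<in> S" and "\<And>x y. (x, y) \<in> E \<Longrightarrow> x \<in> S \<longleftrightarrow> y \<in> S"
  shows "component E v \<subseteq> S"
proof
  fix w assume "w \<in> component E v"
  then have "(v, w) \<in> (E \<union> E\<inverse>)\<^sup>*" by simp
  then show "w \<in> S" by induction (use assms in auto)
qed

lemma set_subset_rtrancl_Image_hd:
  "set (zip xs (tl xs)) \<subseteq> E \<Longrightarrow> set xs \<subseteq> E\<^sup>* `` {hd xs}"
proof (induction xs rule: induct_list012)
  case (3 x y zs)
  then have "set (y # zs) \<subseteq> E\<^sup>* `` {y}" and "(x, y) \<in> E" by auto
  then show ?case by (auto intro: converse_rtrancl_into_rtrancl)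
qed auto

lemma component_eq_walk_set:
  assumes walk: "set (zip xs (tl xs)) \<subseteq> E"
    and closed: "\<And>x y. (x, y) \<in> E \<Longrightarrow> x \<in> set xs \<longleftrightarrow> y \<in> set xs"
    and v: "v \<in> set xs"
  shows "component E v = set xs"
proof
  show "component E v \<subseteq> set xs"
    using v closed by (rule component_subset_if_closed)
  have sym: "sym ((E \<union> E\<inverse>)\<^sup>*)"
    by (intro sym_rtrancl) (auto simp: sym_def)
  have "set xs \<subseteq> component E (hd xs)"
    using set_subset_rtrancl_Image_hd[OF walk] rtrancl_mono[of E "E \<union> E\<inverse>"] by blast
  then show "set xs \<subseteq> component E v"
    using v sym by (blast dest: symD intro: rtrancl_trans)
qed

lemma map_support_eq_rotate1:
  assumes "permutation p"
  shows "map p (support p x) = rotate1 (support p x)"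
proof -
  obtain n where n: "least_power p x = Suc n"
    using least_power_of_permutation(2)[OF assms] gr0_implies_Suc by blast
  have "map p (support p x) = map (\<lambda>i. (p ^^ Suc i) x) [0..<Suc n]"
    by (simp add: n)
  also have "\<dots> = map (\<lambda>i. (p ^^ Suc i) x) [0..<n] @ [x]"
    using least_power_of_permutation(1)[OF assms, of x] by (simp add: n)
  also have "\<dots> = rotate1 (support p x)"
    by (simp add: n upt_conv_Cons map_Suc_upt[symmetric] del: upt_Suc funpow.simps)
  finally show ?thesis .
qed

lemma support_ne_Nil: "permutation p \<Longrightarrow> support p x \<noteq> []"
  using least_power_of_permutation(2)[of p x] by simp

lemma hd_support: "permutation p \<Longrightarrow> hd (support p x) = x"
  using least_power_of_permutation(2)[of p x] by (simp add: hd_map)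

lemma set_support_eq_orbit: "permutation p \<Longrightarrow> set (support p x) = orbit p x"
  using support_set orbit_altdef_permutation by fastforce

lemma last_support_apply:
  assumes "permutation p"
  shows "last (support p (p x)) = x"
proof -
  let ?cs = "support p (p x)"
  have "p (last ?cs) = last (rotate1 ?cs)"
    using map_support_eq_rotate1[OF assms] support_ne_Nil[OF assms] by (metis last_map)
  also have "\<dots> = p x"
    using support_ne_Nil[OF assms] hd_support[OF assms] by (simp add: rotate1_hd_tl)
  finally show ?thesis
    using permutation_bijective[OF assms] by (simp add: bij_is_inj inj_eq)
qed

lemma apply_in_orbit_iff:
  assumes "permutation p"
  shows "p u \<in> orbit p x \<longleftrightarrow> u \<in> orbit p x"
  by (metis assms cyclic_on_orbit' orbit.step orbit_cyclic_eq3 permutation_orbit_step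
      permutation_self_in_orbit)

definition arcs_except :: "('a \<Rightarrow> 'a) \<Rightarrow> 'a \<Rightarrow> ('a \<times> 'a) set" where
  "arcs_except g t = {(v, g v) | v. v \<noteq> t}"

context
  fixes g :: "'a \<Rightarrow> 'a"
  assumes perm: "permutation g"
begin

lemma orbit_closed_arcs_except:
  "(x, z) \<in> arcs_except g t \<Longrightarrow> x \<in> orbit g y \<longleftrightarrow> z \<in> orbit g y"
  using apply_in_orbit_iff[OF perm] by (auto simp: arcs_except_def)

lemma arcs_in_orbit:
  "arcs_in (orbit g x) (arcs_except g t) = {(u, g u) | u. u \<in> orbit g x} - {(t, g t)}"
  using apply_in_orbit_iff[OF perm] by (auto simp: arcs_in_def arcs_except_def)

lemma orbit_through_excluded_vertex:
  shows "is_dipath (orbit g t) (arcs_in (orbit g t) (arcs_except g t))"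
    and "v \<in> orbit g t \<Longrightarrow> component (arcs_except g t) v = orbit g t"
proof -
  define ys where "ys = support g (g t)"
  have ys: "ys \<noteq> []" "distinct ys" "set ys = orbit g t"
    using support_ne_Nil[OF perm] cycle_of_permutation[OF perm] set_support_eq_orbit[OF perm]
      permutation_orbit_step[OF perm] by (auto simp: ys_def)
  \<comment> \<open>Listed from g t, the orbit ends in t, so deleting (t, g t) leaves the path along ys.\<close>
  have arcs: "arcs_in (orbit g t) (arcs_except g t) = set (zip ys (tl ys))"
    using set_zip_tl_eq_rotate1_Diff[OF ys(2,1)] arcs_in_orbit
      set_zip_rotate1_eq_graph[OF map_support_eq_rotate1[OF perm]] ys(3)
      last_support_apply[OF perm] hd_support[OF perm]
    by (simp add: ys_def)
  then show "is_dipath (orbit g t) (arcs_in (orbit g t) (arcs_except g t))"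
    unfolding is_dipath_def using ys by blast
  show "component (arcs_except g t) v = orbit g t" if "v \<in> orbit g t"
    using component_eq_walk_set[of ys "arcs_except g t" v] arcs orbit_closed_arcs_except ys(3) that
    by (auto simp: arcs_in_def)
qed

lemma orbit_avoiding_excluded_vertex:
  assumes "t \<notin> orbit g x"
  shows "is_dicycle (orbit g x) (arcs_in (orbit g x) (arcs_except g t))"
    and "component (arcs_except g t) x = orbit g x"
proof -
  define cs where "cs = support g x"
  have cs: "cs \<noteq> []" "distinct cs" "set cs = orbit g x" "x \<in> set cs"
    using support_ne_Nil[OF perm] cycle_of_permutation[OF perm] set_support_eq_orbit[OF perm]
      permutation_self_in_orbit[OF perm] by (auto simp: cs_def)
  have arcs: "arcs_in (orbit g x) (arcs_except g t) = set (zip cs (rotate1 cs))"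
    using arcs_in_orbit assms set_zip_rotate1_eq_graph[OF map_support_eq_rotate1[OF perm]] cs(3)
    by (simp add: cs_def)
  then show "is_dicycle (orbit g x) (arcs_in (orbit g x) (arcs_except g t))"
    unfolding is_dicycle_def using cs by (auto simp: rotate1_hd_tl)
  have "set (zip cs (tl cs)) \<subseteq> arcs_except g t"
    using set_zip_tl_eq_rotate1_Diff[OF cs(2,1)] arcs by (auto simp: arcs_in_def)
  then show "component (arcs_except g t) x = orbit g x"
    using component_eq_walk_set orbit_closed_arcs_except cs(3,4) by metis
qed

lemma components_arcs_except:
  assumes "C \<in> components UNIV (arcs_except g t)"
  shows "C = orbit g t \<or> (\<exists>x. C = orbit g x \<and> t \<notin> orbit g x)"
proof -
  obtain v where v: "C = component (arcs_except g t) v"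
    using assms unfolding components_UNIV by blast
  show ?thesis
  proof (cases "t \<in> orbit g v")
    case True
    have "v \<in> orbit g t"
      by (rule orbit_swap[OF permutation_self_in_orbit[OF perm] True])
    then show ?thesis using v orbit_through_excluded_vertex(2) by blast
  next
    case False
    then show ?thesis using v orbit_avoiding_excluded_vertex(2) by blast
  qed
qed

lemma dipath_components_arcs_except:
  "{C \<in> components UNIV (arcs_except g t). is_dipath C (arcs_in C (arcs_except g t))} = {orbit g t}"
  (is "?D = _")
proof (intro equalityI subsetI)
  fix C assume "C \<in> ?D"
  then have C: "C \<in> components UNIV (arcs_except g t)" "is_dipath C (arcs_in C (arcs_except g t))"
    by auto
  show "C \<in> {orbit g t}"
  proof (rule ccontr)
    assume "C \<notin> {orbit g t}"
    then obtain x where x: "C = orbit g x" "t \<notin> orbit g x"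
      using components_arcs_except[OF C(1)] by blast
    obtain v where "v \<in> C" "\<And>w. (v, w) \<notin> arcs_in C (arcs_except g t)"
      using dipath_has_sink[OF C(2)] by blast
    then show False using arcs_in_orbit[of x t] x by auto
  qed
next
  fix C assume "C \<in> {orbit g t}"
  moreover have "orbit g t \<in> components UNIV (arcs_except g t)"
    unfolding components_UNIV
    using orbit_through_excluded_vertex(2)[OF permutation_self_in_orbit[OF perm]] by (metis rangeI)
  ultimately show "C \<in> ?D"
    using orbit_through_excluded_vertex(1) by auto
qed

lemma spanning_quasi_path_arcs_except:
  assumes "arcs_except g t \<subseteq> A"
  shows "spanning_quasi_path UNIV A (arcs_except g t)"
proof -
  have "\<forall>C \<in> components UNIV (arcs_except g t).
      is_dipath C (arcs_in C (arcs_except g t)) \<or> is_dicycle C (arcs_in C (arcs_except g t))"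
    using components_arcs_except orbit_through_excluded_vertex(1) orbit_avoiding_excluded_vertex(1)
    by blast
  then show ?thesis
    using assms dipath_components_arcs_except unfolding spanning_quasi_path_def by simp
qed

end

lemma inj_on_Compl_singleton_extends_to_permutation:
  fixes f :: "'a::finite \<Rightarrow> 'a"
  assumes "inj_on f (- {t})"
  obtains s where "permutation (f(t := s))"
proof -
  have "card (f ` (- {t})) < card (UNIV :: 'a set)"
    using assms card_Diff1_less[of UNIV t] by (simp add: card_image Compl_eq_Diff_UNIV)
  then obtain s where s: "s \<notin> f ` (- {t})"
    by (metis UNIV_I less_irrefl subsetI subset_antisym)
  have "inj (f(t := s))"
    using assms s unfolding inj_on_def by (metis ComplI fun_upd_apply image_eqI singletonD)
  then have "bij (f(t := s))"
    using finite_UNIV_inj_surj[of "f(t := s)"] by (simp add: bij_def)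
  then show thesis
    by (intro that) (simp add: permutation)
qed

lemma spanning_quasi_path_of_inj_on:
  fixes f :: "'a::finite \<Rightarrow> 'a"
  assumes "inj_on f (- {t})" and "arcs_except f t \<subseteq> A"
  shows "spanning_quasi_path UNIV A (arcs_except f t)"
proof -
  obtain s where perm: "permutation (f(t := s))"
    using inj_on_Compl_singleton_extends_to_permutation[OF assms(1)] .
  have "arcs_except (f(t := s)) t = arcs_except f t"
    by (auto simp: arcs_except_def)
  then show ?thesis
    using spanning_quasi_path_arcs_except[OF perm, of t A] assms(2) by simp
qed

inductive_set multiples :: "'a::monoid_add \<Rightarrow> 'a set" for d where
  zero: "0 \<in> multiples d"
| step: "x \<in> multiples d \<Longrightarrow> x + d \<in> multiples d"

definition closed_off_zero :: "'a::ab_group_add \<Rightarrow> 'a set \<Rightarrow> bool" where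
  "closed_off_zero d C \<longleftrightarrow> 0 \<in> C \<and> (\<forall>c \<in> C - {0}. c + d \<in> C)"

lemma translation_closed_diff:
  fixes d :: "'a::{ab_group_add,finite}"
  assumes "\<forall>y \<in> S. y + d \<in> S" and "x \<in> S"
  shows "x - d \<in> S"
proof -
  have "(\<lambda>y. y + d) ` S = S"
    using assms(1) by (intro endo_inj_surj) (auto simp: inj_on_def)
  then show ?thesis
    using assms(2) by (metis add_diff_cancel imageE)
qed

lemma closed_off_zero_coset_trade:
  fixes d :: "'a::{ab_group_add,finite}"
  assumes zero: "0 \<in> C" and closed: "\<forall>c \<in> C. c + d \<in> C"
    and coset: "\<forall>m \<in> multiples d. x + m \<notin> C"
  defines "C' \<equiv> (C - (multiples d - {0})) \<union> (+) x ` multiples d"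
  shows "closed_off_zero d C'" and "card C' = Suc (card C)"
proof -
  let ?H = "multiples d"
  have H_sub: "?H \<subseteq> C"
  proof
    fix m assume "m \<in> ?H"
    then show "m \<in> C" by induction (use zero closed in auto)
  qed
  show "closed_off_zero d C'"
    unfolding closed_off_zero_def
  proof (intro conjI ballI)
    show "0 \<in> C'" using zero by (simp add: C'_def)
    fix c assume c: "c \<in> C' - {0}"
    show "c + d \<in> C'"
    proof (cases "c \<in> (+) x ` ?H")
      case True
      then show ?thesis
        unfolding C'_def by (auto simp: add.assoc intro: multiples.step)
    next
      case False
      then have "c \<in> C" "c \<notin> ?H" using c by (auto simp: C'_def)
      moreover have "c + d \<notin> ?H"
        using translation_closed_diff[of ?H d "c + d"] \<open>c \<notin> ?H\<close> by (auto intro: multiples.step)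
      ultimately show ?thesis
        using closed by (simp add: C'_def)
    qed
  qed
  have "0 \<in> ?H" by (rule multiples.zero)
  then have "card (?H - {0}) = card ?H - 1" and "card ?H \<ge> 1"
    by (auto simp: Suc_le_eq card_gt_0_iff)
  moreover have "card (C - (?H - {0})) = card C - card (?H - {0})"
    using H_sub by (intro card_Diff_subset) auto
  moreover have "card (?H - {0}) \<le> card C"
    using H_sub by (intro card_mono) auto
  moreover have "card ((+) x ` ?H) = card ?H"
    by (simp add: card_image)
  moreover have "(C - (?H - {0})) \<inter> (+) x ` ?H = {}"
    using coset by auto
  ultimately show "card C' = Suc (card C)"
    unfolding C'_def by (simp add: card_Un_disjoint)
qed

lemma closed_off_zero_grow:
  fixes d :: "'a::{ab_group_add,finite}"
  assumes C: "closed_off_zero d C" and "C \<noteq> UNIV"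
  obtains C' where "closed_off_zero d C'" and "card C' = Suc (card C)"
proof (cases "\<exists>x. x \<notin> C \<and> x + d \<in> C")
  case True
  then obtain x where "x \<notin> C" "x + d \<in> C" by blast
  then show thesis
    using C by (intro that[of "insert x C"]) (auto simp: closed_off_zero_def)
next
  case False
  obtain x where x: "x \<notin> C" using assms(2) by blast
  have "0 \<in> C" using C by (simp add: closed_off_zero_def)
  moreover have "\<forall>c \<in> C. c + d \<in> C"
    using translation_closed_diff[of "- C" d] False by force
  moreover have "\<forall>m \<in> multiples d. x + m \<notin> C"
  proof
    fix m assume "m \<in> multiples d"
    then show "x + m \<notin> C" by induction (use x False in \<open>auto simp: add.assoc[symmetric]\<close>)
  qed
  ultimately show thesis
    using closed_off_zero_coset_trade that by metis
qed

lemma closed_off_zero_of_card: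
  fixes d :: "'a::{ab_group_add,finite}"
  assumes "0 < n" and "n \<le> card (UNIV :: 'a set)"
  obtains C :: "'a set" where "closed_off_zero d C" and "card C = n"
proof -
  have "\<exists>C :: 'a set. closed_off_zero d C \<and> card C = n"
    using assms
  proof (induction n)
    case (Suc n)
    show ?case
    proof (cases "n = 0")
      case True
      then show ?thesis by (intro exI[of _ "{0}"]) (simp add: closed_off_zero_def)
    next
      case False
      then obtain C :: "'a set" where C: "closed_off_zero d C" "card C = n"
        using Suc by auto
      then have "C \<noteq> UNIV" using Suc.prems(2) by auto
      then show ?thesis using closed_off_zero_grow[OF C(1)] C(2) by metis
    qed
  qed simp
  then show thesis using that by blast
qed

lemma inj_on_mixed_translation:
  fixes a b :: "'a::ab_group_add"
  assumes "closed_off_zero (a - b) C"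
  shows "inj_on (\<lambda>v. if v \<in> C then v + a else v + b) (- {0})"
proof -
  have no_collision: "v + a \<noteq> w + b" if "v \<in> C" "v \<noteq> 0" "w \<notin> C" for v w
  proof
    assume "v + a = w + b"
    then have "w = v + (a - b)" by (simp add: algebra_simps)
    then show False using assms that by (auto simp: closed_off_zero_def)
  qed
  show ?thesis
    unfolding inj_on_def using no_collision by (auto split: if_splits) (metis no_collision)
qed

theorem mainTheorem19:
  fixes a b :: "'a::{ab_group_add, finite}" and k :: nat
  assumes "a \<noteq> b" and "generates2 a b" and "k < card (UNIV :: 'a set)"
  shows "\<exists>E. spanning_quasi_path UNIV (cay_arcs a b) E \<and> delta_b b E = k"
proof -
  obtain C where C: "closed_off_zero (a - b) C" "card C = card (UNIV :: 'a set) - k"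
    using closed_off_zero_of_card[where d = "a - b" and n = "card (UNIV :: 'a set) - k"] assms(3)
    by auto
  define f where "f v = (if v \<in> C then v + a else v + b)" for v
  have "spanning_quasi_path UNIV (cay_arcs a b) (arcs_except f 0)"
    using inj_on_mixed_translation[OF C(1)]
    by (intro spanning_quasi_path_of_inj_on) (auto simp: f_def[abs_def] arcs_except_def cay_arcs_def)
  moreover have "{e \<in> arcs_except f 0. snd e = fst e + b} = (\<lambda>v. (v, v + b)) ` (- C)"
    using C(1) \<open>a \<noteq> b\<close> by (auto simp: arcs_except_def f_def closed_off_zero_def)
  then have "delta_b b (arcs_except f 0) = card (- C)"
    by (simp add: delta_b_def card_image inj_on_def)
  then have "delta_b b (arcs_except f 0) = k"
    using C(2) assms(3) by (simp add: Compl_eq_Diff_UNIV card_Diff_subset)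
  ultimately show ?thesis by blast
qed

end
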